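(* Let $b\ge2$ be an integer, $\lambda\in(1/b,1)$, and let $\phi$ be a $\mathbb{Z}$-periodic, continuous, piecewise $C^2$ function such that $W=W^\phi_{\lambda,b}$ is not Lipschitz. Then for every $\varepsilon>0$ there exists $\delta>0$ such that for every $\mathbf{j}\in\Sigma$ and every $y\in\mathbb{R}$, $\pi_{\mathbf{j}}\mu\big(B(y,\delta)\big)<\varepsilon$.
   Context: $W(x)=\sum_{n\ge0}\lambda^n\phi(b^nx)$. $\mu$ is the pushforward of Lebesgue measure on $[0,1)$ under $x\mapsto(x,W(x))$. $\Sigma=\{0,\dots,b-1\}^{\mathbb{Z}_+}$, $\gamma=1/(b\lambda)$, $Y(x,\mathbf{j})=-\sum_{n\ge1}\gamma^n\phi'\!\left(\frac{x}{b^n}+\frac{j_1}{b^n}+\cdots+\frac{j_n}{b}\right)$ (with one-sided derivatives at break points), $\Gamma_{\mathbf{j}}(x)=\int_0^xY(t,\mathbf{j})dt$, $\pi_{\mathbf{j}}(x,y)=y-\Gamma_{\mathbf{j}}(x)$, and $\pi_{\mathbf{j}}\mu$ is the pushforward of $\mu$ under $\pi_{\mathbf{j}}$. $B(y,r)$ is the open interval of radius $r$ centered at $y$. *)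

theory Defs
  imports "HOL-Analysis.Analysis"
begin

definition C2_on_real :: "(real \<Rightarrow> real) \<Rightarrow> bool" where
  "C2_on_real g \<longleftrightarrow> (\<exists>g' g''. (\<forall>x. (g has_real_derivative g' x) (at x)
        \<and> (g' has_real_derivative g'' x) (at x)) \<and> continuous_on UNIV g'')"

text \<open>Piecewise C^2 on a period [0,1]: finitely many break points
  0 = a 0 < a 1 < ... < a m = 1, and on each closed piece phi agrees with a C^2 function
  (i.e. phi is C^2 up to the endpoints of each piece).  Together with Z-periodicity this
  gives piecewise C^2 on all of R.\<close>
definition piecewise_C2 :: "(real \<Rightarrow> real) \<Rightarrow> bool" where
  "piecewise_C2 \<phi> \<longleftrightarrow> (\<exists>(a::nat \<Rightarrow> real) m. a 0 = 0 \<and> a m = 1 \<and>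
      (\<forall>i<m. a i < a (Suc i) \<and>
         (\<exists>g. C2_on_real g \<and> (\<forall>x\<in>{a i..a (Suc i)}. \<phi> x = g x))))"

text \<open>Right derivative (the one-sided derivative convention used at break points).\<close>
definition rderiv :: "(real \<Rightarrow> real) \<Rightarrow> real \<Rightarrow> real" where
  "rderiv f x = Lim (at_right 0) (\<lambda>h. (f (x + h) - f x) / h)"

definition Wfun :: "(real \<Rightarrow> real) \<Rightarrow> real \<Rightarrow> nat \<Rightarrow> real \<Rightarrow> real" where
  "Wfun \<phi> lam b x = (\<Sum>n. lam ^ n * \<phi> (real b ^ n * x))"

definition graph_measure :: "(real \<Rightarrow> real) \<Rightarrow> real \<Rightarrow> nat \<Rightarrow> (real \<times> real) measure" where
  "graph_measure \<phi> lam b = distr (lebesgue_on {0..<1}) borel (\<lambda>x. (x, Wfun \<phi> lam b x))"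

text \<open>Sigma: sequences j = (j_1, j_2, ...) with digits in {0..b-1}; index 0 is unused.\<close>
definition SigmaSeq :: "nat \<Rightarrow> (nat \<Rightarrow> nat) set" where
  "SigmaSeq b = {j. \<forall>n\<ge>1. j n < b}"

definition Yfun :: "(real \<Rightarrow> real) \<Rightarrow> real \<Rightarrow> nat \<Rightarrow> real \<Rightarrow> (nat \<Rightarrow> nat) \<Rightarrow> real" where
  "Yfun \<phi> lam b x j = - (\<Sum>n. (1 / (real b * lam)) ^ (Suc n) *
      rderiv \<phi> (x / real b ^ (Suc n) + (\<Sum>k=1..Suc n. real (j k) / real b ^ (Suc n - k + 1))))"

definition Gammafun :: "(real \<Rightarrow> real) \<Rightarrow> real \<Rightarrow> nat \<Rightarrow> (nat \<Rightarrow> nat) \<Rightarrow> real \<Rightarrow> real" where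
  "Gammafun \<phi> lam b j x = integral {0..x} (\<lambda>t. Yfun \<phi> lam b t j)"

definition proj_j :: "(real \<Rightarrow> real) \<Rightarrow> real \<Rightarrow> nat \<Rightarrow> (nat \<Rightarrow> nat) \<Rightarrow> real \<times> real \<Rightarrow> real" where
  "proj_j \<phi> lam b j p = snd p - Gammafun \<phi> lam b j (fst p)"

definition proj_measure :: "(real \<Rightarrow> real) \<Rightarrow> real \<Rightarrow> nat \<Rightarrow> (nat \<Rightarrow> nat) \<Rightarrow> real measure" where
  "proj_measure \<phi> lam b j = distr (graph_measure \<phi> lam b) borel (proj_j \<phi> lam b j)"

end

theory Submission
  imports Defs
begin

text \<open>The projection \<open>\<pi>\<^sub>j\<close> sends the graph point \<open>(x, W x)\<close> to
  \<open>F\<^sub>j x = W x - \<Gamma>\<^sub>j x\<close>, so \<open>\<pi>\<^sub>j\<mu>(B(y, \<delta>))\<close> is the Lebesgue measure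
  of a band \<open>{x \<in> [0,1) : |F\<^sub>j x - y| < \<delta>}\<close>.  Since \<open>W\<close> and \<open>\<Gamma>\<^sub>j\<close> are
  self-affine, \<open>F\<^sub>j\<close> restricted to the \<open>i\<close>-th \<open>b\<close>-adic interval is an affine
  image of \<open>F\<^sub>i\<^sub>j\<close>, where \<open>ij\<close> is \<open>j\<close> with the digit \<open>i\<close> prepended.  Hence the
  measure of a level set \<open>{F\<^sub>j = y}\<close> is the average of \<open>b\<close> measures of level sets of
  the same kind.  The level measure is upper semicontinuous in \<open>(j, y)\<close> and \<open>\<Sigma>\<close> is
  compact, so its supremum \<open>M\<close> is attained; averaging then propagates maximality to every
  \<open>b\<close>-adic interval, so a maximising level set is dense if \<open>M > 0\<close>, forcing
  \<open>W = y + \<Gamma>\<^sub>j\<close>, which is Lipschitz.  Thus \<open>M = 0\<close>, and the same compactness and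
  semicontinuity bound the measures of thin bands uniformly.\<close>

lemma ex_interval_index:
  fixes a :: "nat \<Rightarrow> real"
  assumes "\<forall>i<m. a i < a (Suc i)" "a 0 \<le> z" "z < a m"
  shows "\<exists>i<m. a i \<le> z \<and> z < a (Suc i)"
  using assms
proof (induction m)
  case (Suc m)
  show ?case
  proof (cases "z < a m")
    case True
    then show ?thesis using Suc by (metis less_SucI)
  qed (use Suc in auto)
qed simp

lemma suminf_geometric_majorant:
  fixes f :: "nat \<Rightarrow> real"
  assumes "\<And>n. \<bar>f n\<bar> \<le> C * q ^ n" "0 \<le> q" "q < 1"
  shows "summable f" "\<bar>suminf f\<bar> \<le> C / (1 - q)"
proof -
  have sg: "summable (\<lambda>n. C * q ^ n)" using assms by (intro summable_mult summable_geometric) auto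
  show "summable f" by (rule summable_comparison_test[OF _ sg]) (use assms in auto)
  have sa: "summable (\<lambda>n. \<bar>f n\<bar>)" by (rule summable_comparison_test[OF _ sg]) (use assms in auto)
  have "\<bar>suminf f\<bar> \<le> (\<Sum>n. \<bar>f n\<bar>)" using sa summable_rabs by blast
  also have "\<dots> \<le> (\<Sum>n. C * q ^ n)" using sa sg assms(1) by (intro suminf_le) auto
  also have "\<dots> = C / (1 - q)" using assms by (simp add: suminf_mult suminf_geometric divide_simps)
  finally show "\<bar>suminf f\<bar> \<le> C / (1 - q)" .
qed

lemma suminf_geometric_majorant_tail:
  fixes f :: "nat \<Rightarrow> real"
  assumes "\<And>n. \<bar>f n\<bar> \<le> C * q ^ n" "0 \<le> q" "q < 1" "\<And>n. n < N \<Longrightarrow> f n = 0"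
  shows "\<bar>suminf f\<bar> \<le> C * q ^ N / (1 - q)"
proof -
  have "suminf f = (\<Sum>n. f (n + N))"
    using suminf_minus_initial_segment[OF suminf_geometric_majorant(1)[OF assms(1-3)], of N] assms(4)
    by simp
  also have "\<bar>\<dots>\<bar> \<le> (C * q ^ N) / (1 - q)"
  proof (rule suminf_geometric_majorant(2))
    show "\<bar>f (n + N)\<bar> \<le> C * q ^ N * q ^ n" for n
      using assms(1)[of "n + N"] by (simp add: power_add mult_ac)
  qed (use assms in auto)
  finally show ?thesis .
qed

lemma periodic_shift_int:
  fixes h :: "real \<Rightarrow> 'a"
  assumes per: "\<And>x. h (x + 1) = h x"
  shows "h (x + real_of_int k) = h x"
proof -
  have nat_shift: "h (x + real n) = h x" for x n
  proof (induction n)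
    case (Suc n)
    have "h (x + real (Suc n)) = h ((x + real n) + 1)" by (simp add: algebra_simps)
    then show ?case using per Suc by simp
  qed simp
  show ?thesis
  proof (cases "k \<ge> 0")
    case True then show ?thesis using nat_shift[of x "nat k"] by simp
  next
    case False then show ?thesis using nat_shift[of "x + real_of_int k" "nat (- k)"] by simp
  qed
qed

lemma lipschitz_on_periodic:
  fixes h :: "real \<Rightarrow> real"
  assumes per: "\<And>x. h (x + 1) = h x" and lip: "L-lipschitz_on {0..1} h"
  shows "L-lipschitz_on UNIV h"
proof -
  have shift: "h (x + real_of_int k) = h x" for x k
    using periodic_shift_int[where h=h, OF per] .
  have unit: "L-lipschitz_on {real_of_int k..real_of_int k + 1} h" for k
  proof (rule lipschitz_onI)
    fix x y assume "x \<in> {real_of_int k..real_of_int k + 1}" "y \<in> {real_of_int k..real_of_int k + 1}"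
    then have "dist (h (x - k)) (h (y - k)) \<le> L * dist (x - k) (y - k)"
      by (intro lipschitz_onD[OF lip]) auto
    then show "dist (h x) (h y) \<le> L * dist x y"
      using shift[of "x - k" k] shift[of "y - k" k] by (simp add: dist_real_def)
  qed (rule lipschitz_on_nonneg[OF lip])
  have long: "L-lipschitz_on {real_of_int k..real_of_int k + real (Suc n)} h" for k n
  proof (induction n)
    case (Suc n)
    have "L-lipschitz_on {real_of_int (k + int (Suc n))..real_of_int (k + int (Suc n)) + 1} h"
      by (rule unit)
    then have "L-lipschitz_on {real_of_int k + real (Suc n)..real_of_int k + real (Suc (Suc n))} h"
      by (simp add: algebra_simps)
    from lipschitz_on_concat[OF Suc this] show ?case by simp
  qed (use unit in simp)
  show ?thesis
  proof (rule lipschitz_onI)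
    fix x y :: real
    define k where "k = \<lfloor>min x y\<rfloor>"
    define n where "n = nat \<lceil>\<bar>x - y\<bar>\<rceil>"
    have "x \<in> {real_of_int k..real_of_int k + real (Suc n)}" "y \<in> {real_of_int k..real_of_int k + real (Suc n)}"
      unfolding k_def n_def by (auto, linarith+)
    then show "dist (h x) (h y) \<le> L * dist x y" by (rule lipschitz_onD[OF long])
  qed (rule lipschitz_on_nonneg[OF lip])
qed

lemma borel_measurable_rderiv:
  assumes cont: "continuous_on UNIV f"
    and lim: "\<And>x. ((\<lambda>h. (f (x + h) - f x) / h) \<longlongrightarrow> rderiv f x) (at_right 0)"
  shows "rderiv f \<in> borel_measurable borel"
proof (rule borel_measurable_LIMSEQ_real)
  have to_0: "filterlim (\<lambda>n. 1 / real (Suc n)) (at_right 0) sequentially"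
    by (rule tendsto_imp_filterlim_at_right)
       (auto intro: LIMSEQ_Suc[OF lim_inverse_n'] simp del: of_nat_Suc)
  show "(\<lambda>n. (f (x + 1 / real (Suc n)) - f x) / (1 / real (Suc n))) \<longlonglongrightarrow> rderiv f x" for x
    using filterlim_compose[OF lim to_0] by (simp add: o_def)
  show "(\<lambda>x. (f (x + 1 / real (Suc n)) - f x) / (1 / real (Suc n))) \<in> borel_measurable borel" for n
    by (intro borel_measurable_continuous_onI continuous_intros continuous_on_compose2[OF cont]) auto
qed

lemma borel_measurable_lebesgue_on_of_borel:
  "f \<in> borel_measurable borel \<Longrightarrow> f \<in> borel_measurable (lebesgue_on S)"
  by (metis measurable_lborel2 measurable_restrict_space1 measurable_completion)

lemma compact_digit_sequences: "compact (PiE UNIV (\<lambda>_::nat. {..<(b::nat)}))"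
proof -
  have "compactin (product_topology (\<lambda>i. euclidean) UNIV) (PiE UNIV (\<lambda>_::nat. {..<b}))"
    unfolding compactin_PiE by (auto intro: finite_imp_compact)
  then show ?thesis unfolding euclidean_product_topology by simp
qed

lemma SigmaSeq_bounded_convergent_subseq:
  fixes js :: "nat \<Rightarrow> nat \<Rightarrow> nat" and ys :: "nat \<Rightarrow> real"
  assumes js: "\<And>n. js n \<in> SigmaSeq b" and ys: "\<And>n. \<bar>ys n\<bar> \<le> B" and b: "b > 0"
  obtains r jl yl where "strict_mono r" "jl \<in> SigmaSeq b"
    "\<And>k. k \<ge> 1 \<Longrightarrow> eventually (\<lambda>n. js (r n) k = jl k) sequentially"
    "(\<lambda>n. ys (r n)) \<longlonglongrightarrow> yl"
proof -
  \<comment> \<open>The unused digit at index 0 is reset so that the sequences lie in a compact product space.\<close>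
  define K where "K = PiE UNIV (\<lambda>_::nat. {..<b})"
  define f where "f n = ((js n)(0 := 0), ys n)" for n
  have "compact (K \<times> cball (0::real) B)"
    unfolding K_def by (rule compact_Times[OF compact_digit_sequences compact_cball])
  moreover have "f n \<in> K \<times> cball (0::real) B" for n
    using js ys b unfolding f_def K_def SigmaSeq_def by (auto simp: PiE_def Pi_def)
  ultimately obtain l r where l: "l \<in> K \<times> cball (0::real) B" and r: "strict_mono r"
    and lim: "(f \<circ> r) \<longlonglongrightarrow> l"
    using compact_imp_seq_compact unfolding seq_compact_def by metis
  obtain jl yl where l_eq: "l = (jl, yl)" by fastforce
  note l = l[unfolded l_eq] and lim = lim[unfolded l_eq]
  have "(\<lambda>n. (js (r n))(0 := 0)) \<longlonglongrightarrow> jl"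
    using tendsto_fst[OF lim] by (simp add: f_def o_def)
  then have "(\<lambda>n. ((js (r n))(0 := 0)) k) \<longlonglongrightarrow> jl k" for k
    by (rule continuous_on_tendsto_compose[OF continuous_on_product_coordinates]) auto
  then have ev: "eventually (\<lambda>n. ((js (r n))(0 := 0)) k = jl k) sequentially" for k
    by (simp only: tendsto_discrete)
  have "eventually (\<lambda>n. js (r n) k = jl k) sequentially" if "k \<ge> 1" for k
    using ev[of k] by eventually_elim (use that in simp)
  moreover have "(\<lambda>n. ys (r n)) \<longlonglongrightarrow> yl"
    using tendsto_snd[OF lim] by (simp add: f_def o_def)
  moreover have "jl \<in> SigmaSeq b" using l unfolding K_def SigmaSeq_def by auto
  ultimately show ?thesis using r that by blast
qed

lemma frequently_if_eventually_subseq: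
  assumes "strict_mono r" "eventually (\<lambda>n. P (r n)) sequentially"
  shows "frequently P sequentially"
  unfolding frequently_sequentially
proof
  fix N
  obtain M where M: "\<forall>n\<ge>M. P (r n)" using assms(2) unfolding eventually_sequentially by blast
  have "N \<le> r (max M N)" using seq_suble[OF assms(1), of "max M N"] by simp
  then show "\<exists>n\<ge>N. P n" using M by auto
qed

lemma b_adic_index:
  fixes b n :: nat and x :: real
  assumes "b > 0" "0 \<le> x" "x < 1"
  obtains k where "k < b ^ n" "real k / real b ^ n \<le> x" "x < (real k + 1) / real b ^ n"
proof -
  have bn: "real b ^ n > 0" using assms by simp
  define k where "k = nat \<lfloor>x * real b ^ n\<rfloor>"
  have fl: "real k \<le> x * real b ^ n" "x * real b ^ n < real k + 1"
    unfolding k_def using floor_correct[of "x * real b ^ n"] assms bn by auto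
  have "x * real b ^ n < real b ^ n" using assms bn by simp
  then have "k < b ^ n" using fl by (metis le_less_trans of_nat_less_iff of_nat_power)
  moreover have "real k / real b ^ n \<le> x" "x < (real k + 1) / real b ^ n"
    using fl bn by (auto simp: field_simps)
  ultimately show ?thesis using that by blast
qed

lemma closure_if_meets_b_adic_intervals:
  fixes S :: "real set" and b :: nat
  assumes b: "b \<ge> 2"
    and meets: "\<And>n k. k < b ^ n \<Longrightarrow> \<exists>x\<in>S. real k / real b ^ n \<le> x \<and> x < (real k + 1) / real b ^ n"
  shows "{0..1} \<subseteq> closure S"
proof -
  have "{0..<1} \<subseteq> closure S"
  proof
    fix x0 :: real assume x0: "x0 \<in> {0..<1}"
    show "x0 \<in> closure S"
      unfolding closure_approachable
    proof (intro allI impI)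
      fix \<epsilon> :: real assume "\<epsilon> > 0"
      moreover have "1 / real b < 1" using b by simp
      ultimately obtain n where n: "(1 / real b) ^ n < \<epsilon>" using real_arch_pow_inv by blast
      obtain k where k: "k < b ^ n" "real k / real b ^ n \<le> x0" "x0 < (real k + 1) / real b ^ n"
        using b_adic_index[of b x0 n] b x0 by auto
      obtain x where x: "x \<in> S" "real k / real b ^ n \<le> x" "x < (real k + 1) / real b ^ n"
        using meets[OF k(1)] by blast
      have "\<bar>x - x0\<bar> \<le> 1 / real b ^ n"
        using x(2,3) k(2,3) b by (auto simp: field_simps abs_le_iff)
      then have "dist x x0 < \<epsilon>" using n by (simp add: dist_real_def power_one_over)
      then show "\<exists>x\<in>S. dist x x0 < \<epsilon>" using x(1) by blast
    qed
  qed
  from closure_minimal[OF this closed_closure] show ?thesis by simp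
qed

lemma measure_split_b_adic:
  fixes S :: "real set" and b :: nat
  assumes b: "b > 0" and S: "S \<in> lmeasurable" "S \<subseteq> {0..<1}"
  shows "measure lebesgue S = (\<Sum>i<b. measure lebesgue (S \<inter> {real i / real b..<(real i + 1) / real b}))"
proof -
  define P where "P i = S \<inter> {real i / real b..<(real i + 1) / real b}" for i
  have "S = (\<Union>i<b. P i)"
  proof (intro equalityI subsetI)
    fix x assume x: "x \<in> S"
    then have "0 \<le> x" "x < 1" using S(2) by auto
    then obtain i where "i < b ^ 1" "real i / real b ^ 1 \<le> x" "x < (real i + 1) / real b ^ 1"
      by (rule b_adic_index[OF b])
    then show "x \<in> (\<Union>i<b. P i)" using x unfolding P_def by auto
  qed (auto simp: P_def)
  moreover have "disjoint_family_on P {..<b}"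
    unfolding disjoint_family_on_def
  proof (intro ballI impI)
    fix i i' assume "i \<in> {..<b}" "i' \<in> {..<b}" "i \<noteq> i'"
    have "i < i' + 1 \<and> i' < i + 1" if "x \<in> P i" "x \<in> P i'" for x
    proof -
      have "real i \<le> real b * x" "real b * x < real i + 1" "real i' \<le> real b * x" "real b * x < real i' + 1"
        using that b unfolding P_def by (auto simp: field_simps)
      then show ?thesis by linarith
    qed
    then show "P i \<inter> P i' = {}" using \<open>i \<noteq> i'\<close> by fastforce
  qed
  moreover have "P i \<in> lmeasurable" for i
    unfolding P_def by (rule fmeasurable_Int_fmeasurable[OF S(1)]) simp
  ultimately have "measure lebesgue S = (\<Sum>i<b. measure lebesgue (P i))"
    by (metis measure_finite_Union finite_lessThan fmeasurableD fmeasurableD2 image_subsetI infinity_ennreal_def)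
  then show ?thesis unfolding P_def .
qed

lemma finite_frac_preimage:
  fixes P :: "real set"
  assumes "finite P"
  shows "finite {z \<in> {p..q}. frac z \<in> P}"
proof (rule finite_subset)
  show "{z \<in> {p..q}. frac z \<in> P} \<subseteq> (\<lambda>(k, s). real_of_int k + s) ` ({\<lfloor>p\<rfloor>..\<lfloor>q\<rfloor>} \<times> P)"
  proof
    fix z assume z: "z \<in> {z \<in> {p..q}. frac z \<in> P}"
    then have "\<lfloor>z\<rfloor> \<in> {\<lfloor>p\<rfloor>..\<lfloor>q\<rfloor>}" using floor_mono by auto
    moreover have "z = real_of_int \<lfloor>z\<rfloor> + frac z" by (simp add: frac_def)
    ultimately show "z \<in> (\<lambda>(k, s). real_of_int k + s) ` ({\<lfloor>p\<rfloor>..\<lfloor>q\<rfloor>} \<times> P)"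
      using z by (intro image_eqI[of _ _ "(\<lfloor>z\<rfloor>, frac z)"]) auto
  qed
qed (use assms in auto)

section \<open>Periodic piecewise \<open>C\<^sup>1\<close> functions\<close>

locale periodic_piecewise_C1 =
  fixes \<phi> :: "real \<Rightarrow> real" and a :: "nat \<Rightarrow> real" and m :: nat and G G' :: "nat \<Rightarrow> real \<Rightarrow> real"
  assumes periodic: "\<And>x. \<phi> (x + 1) = \<phi> x"
    and a0: "a 0 = 0" and am: "a m = 1" and a_incr: "\<forall>i<m. a i < a (Suc i)"
    and G_deriv: "\<forall>i<m. \<forall>x. (G i has_real_derivative G' i x) (at x)"
    and G'_cont: "\<forall>i<m. continuous_on UNIV (G' i)"
    and agree: "\<forall>i<m. \<forall>x\<in>{a i..a (Suc i)}. \<phi> x = G i x"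
begin

lemma phi_shift_int: "\<phi> (x + real_of_int k) = \<phi> x"
  by (rule periodic_shift_int) (rule periodic)

lemma piece_index: obtains i where "i < m" "a i \<le> frac x" "frac x < a (Suc i)"
  using ex_interval_index[of m a "frac x"] a_incr a0 am frac_ge_0 frac_lt_1 by auto

lemma phi_eq_piece:
  assumes "i < m" "a i \<le> frac x + h" "frac x + h \<le> a (Suc i)"
  shows "\<phi> (x + h) = G i (frac x + h)"
proof -
  have "\<phi> (x + h) = \<phi> ((frac x + h) + real_of_int \<lfloor>x\<rfloor>)" by (simp add: frac_def)
  also have "\<dots> = \<phi> (frac x + h)" by (rule phi_shift_int)
  finally show ?thesis using agree assms by auto
qed

lemma rderiv_eq_piece:
  assumes i: "i < m" "a i \<le> frac x" "frac x < a (Suc i)"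
  shows "((\<lambda>h. (\<phi> (x + h) - \<phi> x) / h) \<longlongrightarrow> G' i (frac x)) (at_right 0)"
    and "rderiv \<phi> x = G' i (frac x)"
proof -
  have "(G i has_real_derivative G' i (frac x)) (at (frac x))" using G_deriv i(1) by blast
  then have "((\<lambda>h. (G i (frac x + h) - G i (frac x)) / h) \<longlongrightarrow> G' i (frac x)) (at 0)"
    by (simp add: DERIV_def)
  then have "((\<lambda>h. (G i (frac x + h) - G i (frac x)) / h) \<longlongrightarrow> G' i (frac x)) (at_right 0)"
    using filterlim_at_split by blast
  moreover have "eventually (\<lambda>h. (G i (frac x + h) - G i (frac x)) / h = (\<phi> (x + h) - \<phi> x) / h) (at_right 0)"
    unfolding eventually_at_right_field
  proof (intro exI[of _ "a (Suc i) - frac x"] conjI allI impI)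
    fix h :: real assume "0 < h" "h < a (Suc i) - frac x"
    then have "\<phi> (x + h) = G i (frac x + h)" "\<phi> (x + 0) = G i (frac x + 0)"
      using i by (intro phi_eq_piece; simp)+
    then show "(G i (frac x + h) - G i (frac x)) / h = (\<phi> (x + h) - \<phi> x) / h" by simp
  qed (use i in simp)
  ultimately show lim: "((\<lambda>h. (\<phi> (x + h) - \<phi> x) / h) \<longlongrightarrow> G' i (frac x)) (at_right 0)"
    by (rule tendsto_cong[THEN iffD1, rotated])
  show "rderiv \<phi> x = G' i (frac x)"
    unfolding rderiv_def by (rule tendsto_Lim[OF _ lim]) simp
qed

lemma rderiv_right_limit: "((\<lambda>h. (\<phi> (x + h) - \<phi> x) / h) \<longlongrightarrow> rderiv \<phi> x) (at_right 0)"
proof -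
  obtain i where i: "i < m" "a i \<le> frac x" "frac x < a (Suc i)" by (rule piece_index)
  show ?thesis using rderiv_eq_piece[OF i] by simp
qed

lemma rderiv_bounded: "\<exists>D. \<forall>x. \<bar>rderiv \<phi> x\<bar> \<le> D"
proof -
  have "\<exists>B. \<forall>z\<in>{a i..a (Suc i)}. \<bar>G' i z\<bar> \<le> B" if "i < m" for i
  proof -
    have "compact (G' i ` {a i..a (Suc i)})"
      by (intro compact_continuous_image continuous_on_subset[OF G'_cont[rule_format, OF that]]) auto
    then show ?thesis by (metis bounded_iff compact_imp_bounded imageI real_norm_def)
  qed
  then obtain B where B: "\<And>i z. i < m \<Longrightarrow> z \<in> {a i..a (Suc i)} \<Longrightarrow> \<bar>G' i z\<bar> \<le> B i" by metis
  have "\<bar>rderiv \<phi> x\<bar> \<le> (\<Sum>i<m. \<bar>B i\<bar>)" for x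
  proof -
    obtain i where i: "i < m" "a i \<le> frac x" "frac x < a (Suc i)" by (rule piece_index)
    have "\<bar>rderiv \<phi> x\<bar> \<le> B i" using rderiv_eq_piece(2)[OF i] B[OF i(1), of "frac x"] i by simp
    also have "\<dots> \<le> \<bar>B i\<bar>" by simp
    also have "\<dots> \<le> (\<Sum>i<m. \<bar>B i\<bar>)" using i(1) by (intro member_le_sum) auto
    finally show ?thesis .
  qed
  then show ?thesis by blast
qed

lemma has_rderiv_off_breaks:
  assumes "frac x \<notin> a ` {..m}"
  shows "(\<phi> has_real_derivative rderiv \<phi> x) (at x)"
proof -
  obtain i where i: "i < m" "a i \<le> frac x" "frac x < a (Suc i)" by (rule piece_index)
  have lt: "a i < frac x" using i assms by (metis atMost_iff imageI less_imp_le_nat order_le_less)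
  define k where "k = real_of_int \<lfloor>x\<rfloor>"
  have xk: "x - k = frac x" by (simp add: k_def frac_def)
  have "((\<lambda>t. G i (t - k)) has_real_derivative G' i (x - k) * 1) (at x)"
    by (rule DERIV_chain2[where f="G i" and g="\<lambda>t. t - k"])
       (use G_deriv i(1) in \<open>auto intro!: derivative_eq_intros\<close>)
  then have "((\<lambda>t. G i (t - k)) has_real_derivative G' i (frac x)) (at x)" by (simp add: xk)
  then show ?thesis unfolding rderiv_eq_piece(2)[OF i]
  proof (rule has_field_derivative_transform_within_open[where S="{a i + k <..< a (Suc i) + k}"])
    show "x \<in> {a i + k<..<a (Suc i) + k}" using lt i xk by auto
    fix t assume t: "t \<in> {a i + k<..<a (Suc i) + k}"
    have "\<phi> t = \<phi> (t - k)" using phi_shift_int[of "t - k" "\<lfloor>x\<rfloor>"] by (simp add: k_def)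
    also have "\<dots> = G i (t - k)" using agree i(1) t by auto
    finally show "G i (t - k) = \<phi> t" by simp
  qed simp
qed

end


lemma piecewise_C2_imp_periodic_piecewise_C1:
  assumes "piecewise_C2 \<phi>" "\<And>x. \<phi> (x + 1) = \<phi> x"
  shows "\<exists>a m G G'. periodic_piecewise_C1 \<phi> a m G G'"
proof -
  obtain a m where am: "a 0 = 0" "a m = 1"
    and H: "\<forall>i<m. a i < a (Suc i) \<and> (\<exists>g. C2_on_real g \<and> (\<forall>x\<in>{a i..a (Suc i)}. \<phi> x = g x))"
    using assms(1) unfolding piecewise_C2_def by blast
  have "\<exists>g g'. (\<forall>x. (g has_real_derivative g' x) (at x)) \<and> continuous_on UNIV g'
           \<and> (\<forall>x\<in>{a i..a (Suc i)}. \<phi> x = g x)" if i: "i < m" for i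
  proof -
    obtain g where "C2_on_real g" and g: "\<forall>x\<in>{a i..a (Suc i)}. \<phi> x = g x"
      using H i by blast
    then obtain g' g'' where d: "\<forall>x. (g has_real_derivative g' x) (at x) \<and> (g' has_real_derivative g'' x) (at x)"
      unfolding C2_on_real_def by blast
    have "continuous_on UNIV g'"
      using d by (meson DERIV_isCont continuous_at_imp_continuous_on)
    then show ?thesis using g d by blast
  qed
  then obtain G G' where "\<forall>i<m. (\<forall>x. (G i has_real_derivative G' i x) (at x)) \<and> continuous_on UNIV (G' i)
           \<and> (\<forall>x\<in>{a i..a (Suc i)}. \<phi> x = G i x)"
    by metis
  then have "periodic_piecewise_C1 \<phi> a m G G'"
    using am H assms(2) by unfold_locales auto
  then show ?thesis by blast
qed

section \<open>The function \<open>W\<close> and the projections \<open>\<pi>\<^sub>j\<close>\<close>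

locale weierstrass =
  fixes b :: nat and lam :: real and \<phi> :: "real \<Rightarrow> real"
  assumes b2: "b \<ge> 2"
    and lam_gt: "1 / real b < lam" and lam_lt1: "lam < 1"
    and periodic: "\<And>x. \<phi> (x + 1) = \<phi> x"
    and phi_cont: "continuous_on UNIV \<phi>"
    and phi_pw: "piecewise_C2 \<phi>"
begin

definition "\<gamma> = 1 / (real b * lam)"

lemma b_pos: "real b > 0" using b2 by simp

lemma lam_pos: "lam > 0"
  using lam_gt b_pos by (metis divide_pos_pos less_trans zero_less_one)

lemma gamma_pos: "\<gamma> > 0" using lam_pos b_pos by (simp add: \<gamma>_def)

lemma gamma_lt1: "\<gamma> < 1"
proof -
  have "real b * lam > 1" using lam_gt b_pos by (simp add: field_simps)
  then show ?thesis by (simp add: \<gamma>_def)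
qed

lemma phi_shift_int: "\<phi> (x + real_of_int k) = \<phi> x"
  by (rule periodic_shift_int) (rule periodic)

lemma phi_shift_nat: "\<phi> (x + real n) = \<phi> x"
  using phi_shift_int[of x "int n"] by simp

lemma phi_bounded: "\<exists>C. \<forall>x. \<bar>\<phi> x\<bar> \<le> C"
proof -
  have "compact (\<phi> ` {0..1})"
    by (intro compact_continuous_image continuous_on_subset[OF phi_cont]) auto
  then obtain C where C: "\<forall>y\<in>\<phi> ` {0..1}. norm y \<le> C"
    using compact_imp_bounded bounded_iff by metis
  have "\<bar>\<phi> x\<bar> \<le> C" for x
  proof -
    have "\<phi> x = \<phi> (frac x)" using phi_shift_int[of "frac x" "\<lfloor>x\<rfloor>"] by (simp add: frac_def)
    moreover have "\<bar>\<phi> (frac x)\<bar> \<le> C" using C frac_ge_0[of x] frac_lt_1[of x] by simp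
    ultimately show ?thesis by simp
  qed
  then show ?thesis by blast
qed

lemma piecewise_data: obtains a m G G' where "periodic_piecewise_C1 \<phi> a m G G'"
proof -
  have "\<exists>a m G G'. periodic_piecewise_C1 \<phi> a m G G'"
    using piecewise_C2_imp_periodic_piecewise_C1 phi_pw periodic by presburger
  then show thesis using that by (elim exE)
qed

lemma rderiv_right_limit: "((\<lambda>h. (\<phi> (x + h) - \<phi> x) / h) \<longlongrightarrow> rderiv \<phi> x) (at_right 0)"
proof -
  obtain a m G G' where "periodic_piecewise_C1 \<phi> a m G G'" by (rule piecewise_data)
  then show ?thesis by (rule periodic_piecewise_C1.rderiv_right_limit)
qed

lemma rderiv_bounded: "\<exists>D. \<forall>x. \<bar>rderiv \<phi> x\<bar> \<le> D"
proof -
  obtain a m G G' where "periodic_piecewise_C1 \<phi> a m G G'" by (rule piecewise_data)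
  then show ?thesis by (rule periodic_piecewise_C1.rderiv_bounded)
qed

lemma has_rderiv_off_finite:
  "\<exists>P. finite P \<and> (\<forall>x. frac x \<notin> P \<longrightarrow> (\<phi> has_real_derivative rderiv \<phi> x) (at x))"
proof -
  obtain a m G G' where "periodic_piecewise_C1 \<phi> a m G G'" by (rule piecewise_data)
  then have "\<forall>x. frac x \<notin> a ` {..m} \<longrightarrow> (\<phi> has_real_derivative rderiv \<phi> x) (at x)"
    using periodic_piecewise_C1.has_rderiv_off_breaks by blast
  then show ?thesis by (intro exI[of _ "a ` {..m}"]) simp
qed

lemma rderiv_borel: "rderiv \<phi> \<in> borel_measurable borel"
  by (rule borel_measurable_rderiv[OF phi_cont rderiv_right_limit])

definition "Cphi = (SOME C. \<forall>x. \<bar>\<phi> x\<bar> \<le> C)"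

lemma Cphi: "\<bar>\<phi> x\<bar> \<le> Cphi"
  using someI_ex[OF phi_bounded] unfolding Cphi_def by blast

lemma Cphi_nonneg: "Cphi \<ge> 0" using Cphi[of 0] by simp

definition "Dphi = (SOME D. \<forall>x. \<bar>rderiv \<phi> x\<bar> \<le> D)"

lemma Dphi: "\<bar>rderiv \<phi> x\<bar> \<le> Dphi"
  using someI_ex[OF rderiv_bounded] unfolding Dphi_def by blast

lemma Dphi_nonneg: "Dphi \<ge> 0" using Dphi[of 0] by simp

abbreviation "W \<equiv> Wfun \<phi> lam b"

lemma W_summand_bound: "\<bar>lam ^ n * \<phi> (real b ^ n * x)\<bar> \<le> Cphi * lam ^ n"
  using Cphi[of "real b ^ n * x"] lam_pos by (simp add: abs_mult mult.commute mult_right_mono)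

lemma W_summable: "summable (\<lambda>n. lam ^ n * \<phi> (real b ^ n * x))"
  using suminf_geometric_majorant(1)[OF W_summand_bound] lam_pos lam_lt1 by simp

lemma W_bound: "\<bar>W x\<bar> \<le> Cphi / (1 - lam)"
  unfolding Wfun_def using suminf_geometric_majorant(2)[OF W_summand_bound] lam_pos lam_lt1 by simp

lemma W_continuous: "continuous_on UNIV W"
proof -
  have "uniform_limit UNIV (\<lambda>n x. \<Sum>i<n. lam ^ i * \<phi> (real b ^ i * x)) W sequentially"
    unfolding Wfun_def
    by (rule Weierstrass_m_test[where M="\<lambda>n. Cphi * lam ^ n"])
       (use W_summand_bound lam_pos lam_lt1 in \<open>auto intro!: summable_mult summable_geometric\<close>)
  then show ?thesis
    by (rule uniform_limit_theorem[rotated])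
       (auto intro!: always_eventually continuous_intros continuous_on_compose2[OF phi_cont])
qed

lemma W_periodic: "W (x + 1) = W x"
proof -
  have "\<phi> (real b ^ n * (x + 1)) = \<phi> (real b ^ n * x)" for n
    using phi_shift_nat[of "real b ^ n * x" "b ^ n"] by (simp add: algebra_simps)
  then show ?thesis unfolding Wfun_def by simp
qed

lemma W_self_affine: "W ((x + real i) / real b) = \<phi> ((x + real i) / real b) + lam * W x"
proof -
  let ?f = "\<lambda>n. lam ^ n * \<phi> (real b ^ n * ((x + real i) / real b))"
  have shift: "?f (Suc n) = lam * (lam ^ n * \<phi> (real b ^ n * x))" for n
  proof -
    have "real b ^ Suc n * ((x + real i) / real b) = real b ^ n * x + real (b ^ n * i)"
      using b_pos by (simp add: field_simps)
    then show ?thesis using phi_shift_nat[of "real b ^ n * x" "b ^ n * i"] by simp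
  qed
  have "summable ?f" by (rule W_summable)
  from suminf_split_head[OF this] have "W ((x + real i) / real b) = ?f 0 + (\<Sum>n. ?f (Suc n))"
    unfolding Wfun_def by simp
  also have "(\<Sum>n. ?f (Suc n)) = lam * W x"
    unfolding shift Wfun_def using W_summable by (simp add: suminf_mult)
  finally show ?thesis by simp
qed

fun branch :: "real \<Rightarrow> (nat \<Rightarrow> nat) \<Rightarrow> nat \<Rightarrow> real" where
  "branch x j 0 = x"
| "branch x j (Suc n) = (branch x j n + real (j (Suc n))) / real b"

declare branch.simps(2)[simp del]

lemma branch_eq_sum: "x / real b ^ n + (\<Sum>k=1..n. real (j k) / real b ^ (n - k + 1)) = branch x j n"
proof (induction n)
  case (Suc n)
  have "(\<Sum>k=1..n. real (j k) / real b ^ (Suc n - k + 1)) = (\<Sum>k=1..n. real (j k) / real b ^ (n - k + 1)) / real b"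
    unfolding sum_divide_distrib by (rule sum.cong) (auto simp: Suc_diff_le)
  then have "(\<Sum>k=1..Suc n. real (j k) / real b ^ (Suc n - k + 1))
      = (\<Sum>k=1..n. real (j k) / real b ^ (n - k + 1)) / real b + real (j (Suc n)) / real b"
    by simp
  then show ?case using Suc[symmetric] b_pos by (simp add: field_simps branch.simps)
qed simp

lemma branch_continuous: "continuous_on UNIV (\<lambda>x. branch x j n)"
  by (induction n) (use b_pos in \<open>auto intro!: continuous_intros simp: branch.simps\<close>)

lemma branch_digits_agree: "(\<forall>k\<in>{1..N}. j k = j' k) \<Longrightarrow> n \<le> N \<Longrightarrow> branch x j n = branch x j' n"
  by (induction n) (auto simp: branch.simps)

abbreviation "Y \<equiv> Yfun \<phi> lam b"

lemma Y_eq_series: "Y x j = - (\<Sum>n. \<gamma> ^ Suc n * rderiv \<phi> (branch x j (Suc n)))"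
  unfolding Yfun_def \<gamma>_def branch_eq_sum ..

lemma Y_summand_bound: "\<bar>\<gamma> ^ Suc n * rderiv \<phi> (branch x j (Suc n))\<bar> \<le> (Dphi * \<gamma>) * \<gamma> ^ n"
  using Dphi[of "branch x j (Suc n)"] gamma_pos by (simp add: abs_mult mult_ac mult_left_mono)

lemma Y_summable: "summable (\<lambda>n. \<gamma> ^ Suc n * rderiv \<phi> (branch x j (Suc n)))"
  using suminf_geometric_majorant(1)[OF Y_summand_bound] gamma_pos gamma_lt1 by simp

definition "CY = Dphi * \<gamma> / (1 - \<gamma>)"

lemma CY_nonneg: "CY \<ge> 0" unfolding CY_def using Dphi_nonneg gamma_pos gamma_lt1 by simp

lemma Y_bound: "\<bar>Y x j\<bar> \<le> CY"
  unfolding Y_eq_series CY_def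
  using suminf_geometric_majorant(2)[OF Y_summand_bound] gamma_pos gamma_lt1 by simp

lemma Y_borel: "(\<lambda>x. Y x j) \<in> borel_measurable borel"
proof -
  have "(\<lambda>x. \<Sum>n. \<gamma> ^ Suc n * rderiv \<phi> (branch x j (Suc n))) \<in> borel_measurable borel"
  proof (rule borel_measurable_LIMSEQ_real)
    show "(\<lambda>N. \<Sum>n<N. \<gamma> ^ Suc n * rderiv \<phi> (branch x j (Suc n)))
            \<longlonglongrightarrow> (\<Sum>n. \<gamma> ^ Suc n * rderiv \<phi> (branch x j (Suc n)))" for x
      using summable_LIMSEQ[OF Y_summable] .
    have "(\<lambda>x. rderiv \<phi> (branch x j (Suc n))) \<in> borel_measurable borel" for n
      using measurable_compose[OF borel_measurable_continuous_onI[OF branch_continuous] rderiv_borel]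
      by (simp add: o_def)
    then show "(\<lambda>x. \<Sum>n<N. \<gamma> ^ Suc n * rderiv \<phi> (branch x j (Suc n))) \<in> borel_measurable borel" for N
      by (intro borel_measurable_sum borel_measurable_times) auto
  qed
  then show ?thesis unfolding Y_eq_series by simp
qed

lemma Y_digits_agree:
  assumes "\<forall>k\<in>{1..N}. j k = j' k"
  shows "\<bar>Y x j - Y x j'\<bar> \<le> 2 * Dphi * \<gamma> * \<gamma> ^ N / (1 - \<gamma>)"
proof -
  let ?f = "\<lambda>n. \<gamma> ^ Suc n * rderiv \<phi> (branch x j (Suc n)) - \<gamma> ^ Suc n * rderiv \<phi> (branch x j' (Suc n))"
  have "Y x j - Y x j' = - ((\<Sum>n. \<gamma> ^ Suc n * rderiv \<phi> (branch x j (Suc n)))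
      - (\<Sum>n. \<gamma> ^ Suc n * rderiv \<phi> (branch x j' (Suc n))))"
    unfolding Y_eq_series by simp
  also have "\<dots> = - suminf ?f"
    using suminf_diff[OF Y_summable Y_summable] by simp
  finally have "Y x j - Y x j' = - suminf ?f" .
  moreover have "\<bar>suminf ?f\<bar> \<le> (2 * Dphi * \<gamma>) * \<gamma> ^ N / (1 - \<gamma>)"
  proof (rule suminf_geometric_majorant_tail)
    show "\<bar>?f n\<bar> \<le> 2 * Dphi * \<gamma> * \<gamma> ^ n" for n
      using Y_summand_bound[of n x j] Y_summand_bound[of n x j'] by linarith
    show "?f n = 0" if "n < N" for n using branch_digits_agree[OF assms, of "Suc n"] that by simp
  qed (use gamma_pos gamma_lt1 in auto)
  ultimately show ?thesis by simp
qed

definition prepend_digit :: "nat \<Rightarrow> (nat \<Rightarrow> nat) \<Rightarrow> nat \<Rightarrow> nat" where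
  "prepend_digit i j = (\<lambda>n. if n \<le> 1 then i else j (n - 1))"

lemma prepend_digit_SigmaSeq: "i < b \<Longrightarrow> j \<in> SigmaSeq b \<Longrightarrow> prepend_digit i j \<in> SigmaSeq b"
  unfolding SigmaSeq_def prepend_digit_def by auto

lemma branch_prepend_digit:
  "branch x (prepend_digit i j) (Suc n) = branch ((x + real i) / real b) j n"
  by (induction n) (auto simp: prepend_digit_def branch.simps)

lemma Y_prepend_digit:
  "Y x (prepend_digit i j) = \<gamma> * (Y ((x + real i) / real b) j - rderiv \<phi> ((x + real i) / real b))"
proof -
  let ?x' = "(x + real i) / real b"
  let ?f = "\<lambda>n. \<gamma> ^ Suc n * rderiv \<phi> (branch x (prepend_digit i j) (Suc n))"
  have "suminf ?f = ?f 0 + (\<Sum>n. ?f (Suc n))" using suminf_split_head[OF Y_summable] by simp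
  also have "?f 0 = \<gamma> * rderiv \<phi> ?x'" using branch_prepend_digit[of x i j 0] by simp
  also have "(\<Sum>n. ?f (Suc n)) = (\<Sum>n. \<gamma> * (\<gamma> ^ Suc n * rderiv \<phi> (branch ?x' j (Suc n))))"
    using branch_prepend_digit[of x i j] by (simp add: mult_ac)
  also have "\<dots> = \<gamma> * (\<Sum>n. \<gamma> ^ Suc n * rderiv \<phi> (branch ?x' j (Suc n)))"
    by (rule suminf_mult[OF Y_summable])
  finally show ?thesis unfolding Y_eq_series[of x] Y_eq_series[of ?x'] by (simp add: algebra_simps)
qed

abbreviation "Gam \<equiv> Gammafun \<phi> lam b"

lemma Y_integrable: "(\<lambda>t. Y t j) integrable_on {p..q}"
  by (rule measurable_bounded_by_integrable_imp_integrable_real[where g="\<lambda>_. CY"])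
     (auto intro: borel_measurable_lebesgue_on_of_borel Y_borel Y_bound)

lemma Gam_nonpos: "x \<le> 0 \<Longrightarrow> Gam j x = 0"
  unfolding Gammafun_def by (metis box_real(2) content_real_eq_0 integral_null)

lemma Gam_diff: "0 \<le> x \<Longrightarrow> x \<le> x' \<Longrightarrow> Gam j x' - Gam j x = integral {x..x'} (\<lambda>t. Y t j)"
  unfolding Gammafun_def
  using Henstock_Kurzweil_Integration.integral_combine[OF _ _ Y_integrable, of 0 x x' j] by simp

lemma Gam_lipschitz_le: "x \<le> x' \<Longrightarrow> \<bar>Gam j x' - Gam j x\<bar> \<le> CY * (x' - x)"
proof -
  have nonneg: "\<bar>Gam j x' - Gam j x\<bar> \<le> CY * (x' - x)" if "0 \<le> x" "x \<le> x'" for x x'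
  proof -
    have "norm (integral {x..x'} (\<lambda>t. Y t j)) \<le> CY * Henstock_Kurzweil_Integration.content {x..x'}"
      by (rule has_integral_bound_real[where S="{}"]) (use CY_nonneg Y_bound Y_integrable in auto)
    then show ?thesis using Gam_diff[OF that] that by simp
  qed
  assume "x \<le> x'"
  consider "0 \<le> x" | "x' \<le> 0" | "x < 0" "0 < x'" by linarith
  then show ?thesis
  proof cases
    case 3
    then show ?thesis using nonneg[of 0 x'] Gam_nonpos[of x j] Gam_nonpos[of 0 j] CY_nonneg
      by (smt (verit) mult_left_mono)
  qed (use nonneg \<open>x \<le> x'\<close> Gam_nonpos CY_nonneg in auto)
qed

lemma Gam_lipschitz: "\<bar>Gam j x - Gam j x'\<bar> \<le> CY * \<bar>x - x'\<bar>"
  using Gam_lipschitz_le[of x x' j] Gam_lipschitz_le[of x' x j]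
  by (cases "x \<le> x'") (auto simp: abs_minus_commute)

lemma Gam_continuous: "continuous_on UNIV (Gam j)"
proof (rule lipschitz_on_continuous_on)
  show "CY-lipschitz_on UNIV (Gam j)"
    unfolding lipschitz_on_def dist_real_def using CY_nonneg Gam_lipschitz by auto
qed

lemma Gam_bound: "0 \<le> x \<Longrightarrow> \<bar>Gam j x\<bar> \<le> CY * x"
  using Gam_lipschitz[of j x 0] Gam_nonpos[of 0 j] by simp

lemma phi_affine_integral:
  assumes x: "0 \<le> x"
  shows "((\<lambda>t. rderiv \<phi> ((t + real i) / real b)) has_integral
           (real b * (\<phi> ((x + real i) / real b) - \<phi> (real i / real b)))) {0..x}"
proof -
  obtain P where P: "finite P" "\<And>z. frac z \<notin> P \<Longrightarrow> (\<phi> has_real_derivative rderiv \<phi> z) (at z)"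
    using has_rderiv_off_finite by blast
  define S where "S = (\<lambda>z. real b * z - real i) ` {z \<in> {real i / real b..(x + real i) / real b}. frac z \<in> P}"
  have "finite S" unfolding S_def using finite_frac_preimage[OF P(1)] by blast
  moreover have "((\<lambda>t. real b * \<phi> ((t + real i) / real b)) has_vector_derivative
      rderiv \<phi> ((t + real i) / real b)) (at t)" if t: "t \<in> {0<..<x} - S" for t
  proof -
    have "t = real b * ((t + real i) / real b) - real i" using b_pos by (simp add: field_simps)
    moreover have "(t + real i) / real b \<in> {real i / real b..(x + real i) / real b}"
      using t b_pos by (auto simp: divide_right_mono)
    ultimately have "frac ((t + real i) / real b) \<notin> P" using t unfolding S_def by blast
    then have "(\<phi> has_real_derivative rderiv \<phi> ((t + real i) / real b)) (at ((\<lambda>t. (t + real i) / real b) t))"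
      using P(2) by simp
    then have "((\<lambda>t. \<phi> ((t + real i) / real b)) has_real_derivative rderiv \<phi> ((t + real i) / real b) * (1 / real b)) (at t)"
      by (rule DERIV_chain2) (use b_pos in \<open>auto intro!: derivative_eq_intros\<close>)
    from DERIV_cmult[OF this, of "real b"] show ?thesis
      using b_pos by (simp add: has_real_derivative_iff_has_vector_derivative)
  qed
  moreover have "continuous_on {0..x} (\<lambda>t. real b * \<phi> ((t + real i) / real b))"
    by (intro continuous_intros continuous_on_compose2[OF phi_cont]) (use b2 in auto)
  ultimately have "((\<lambda>t. rderiv \<phi> ((t + real i) / real b)) has_integral
     (real b * \<phi> ((x + real i) / real b) - real b * \<phi> ((0 + real i) / real b))) {0..x}"
    using x by (intro fundamental_theorem_of_calculus_interior_strong) auto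
  then show ?thesis by (simp add: algebra_simps)
qed

lemma Y_affine_integral:
  assumes x: "0 \<le> x"
  shows "((\<lambda>t. Y ((t + real i) / real b) j) has_integral
           (real b * (Gam j ((x + real i) / real b) - Gam j (real i / real b)))) {0..x}"
proof -
  let ?lo = "real i / real b" and ?hi = "(x + real i) / real b"
  have lo: "0 \<le> ?lo" and hi: "?lo \<le> ?hi" using b_pos x by (auto simp: divide_right_mono)
  have "((\<lambda>t. Y t j) has_integral (Gam j ?hi - Gam j ?lo)) (cbox ?lo ?hi)"
    using Gam_diff[OF lo hi, of j] Y_integrable by (simp add: integrable_integral)
  from has_integral_affinity[OF this, of "1 / real b" "?lo"]
  have "((\<lambda>t. Y ((1 / real b) *\<^sub>R t + ?lo) j) has_integral real b * (Gam j ?hi - Gam j ?lo))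
        ((\<lambda>t. real b * t - real i) ` {?lo..?hi})"
    using b_pos by (simp add: field_simps)
  moreover have "(\<lambda>t. real b * t - real i) ` {?lo..?hi} = {0..x}"
    using image_affinity_atLeastAtMost[of "real b" "- real i" ?lo ?hi] hi b_pos by simp
  ultimately show ?thesis by (simp add: add_divide_distrib)
qed

lemma Gam_prepend_digit:
  assumes x: "0 \<le> x"
  shows "lam * Gam (prepend_digit i j) x = (Gam j ((x + real i) / real b) - Gam j (real i / real b))
           - (\<phi> ((x + real i) / real b) - \<phi> (real i / real b))"
proof -
  have "((\<lambda>t. Y t (prepend_digit i j)) has_integral
     \<gamma> * (real b * (Gam j ((x + real i) / real b) - Gam j (real i / real b))
     - real b * (\<phi> ((x + real i) / real b) - \<phi> (real i / real b)))) {0..x}"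
    unfolding Y_prepend_digit
    by (intro has_integral_diff has_integral_mult_right Y_affine_integral phi_affine_integral x)
  then have "Gam (prepend_digit i j) x = \<gamma> * real b * ((Gam j ((x + real i) / real b) - Gam j (real i / real b))
     - (\<phi> ((x + real i) / real b) - \<phi> (real i / real b)))"
    unfolding Gammafun_def by (simp add: integral_unique algebra_simps)
  moreover have "lam * (\<gamma> * real b) = 1" using lam_pos b_pos by (simp add: \<gamma>_def)
  ultimately show ?thesis by (metis mult.assoc mult_1)
qed

definition graph_proj :: "(nat \<Rightarrow> nat) \<Rightarrow> real \<Rightarrow> real" where
  "graph_proj j x = W x - Gam j x"

definition "prepend_offset i j = \<phi> (real i / real b) - Gam j (real i / real b)"

lemma graph_proj_prepend_digit:
  "0 \<le> x \<Longrightarrow> graph_proj j ((x + real i) / real b) = lam * graph_proj (prepend_digit i j) x + prepend_offset i j"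
  using Gam_prepend_digit[of x i j] W_self_affine[of x i]
  unfolding graph_proj_def prepend_offset_def right_diff_distrib by linarith

lemma graph_proj_continuous: "continuous_on UNIV (graph_proj j)"
  unfolding graph_proj_def using W_continuous Gam_continuous by (intro continuous_intros) auto

definition "Cproj = Cphi / (1 - lam) + CY"

lemma Cproj_nonneg: "Cproj \<ge> 0"
  unfolding Cproj_def using Cphi_nonneg CY_nonneg lam_lt1 by simp

lemma graph_proj_bound: "x \<in> {0..1} \<Longrightarrow> \<bar>graph_proj j x\<bar> \<le> Cproj"
  using W_bound[of x] Gam_bound[of x j] mult_left_mono[of x 1 CY] CY_nonneg
  unfolding graph_proj_def Cproj_def by auto

lemma graph_proj_digits_agree:
  assumes "\<forall>k\<in>{1..N}. j k = j' k" "x \<in> {0..1}"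
  shows "\<bar>graph_proj j x - graph_proj j' x\<bar> \<le> 2 * Dphi * \<gamma> * \<gamma> ^ N / (1 - \<gamma>)"
proof -
  let ?B = "2 * Dphi * \<gamma> * \<gamma> ^ N / (1 - \<gamma>)"
  have B: "?B \<ge> 0" using Dphi_nonneg gamma_pos gamma_lt1 by simp
  have "((\<lambda>t. Y t j - Y t j') has_integral (Gam j x - Gam j' x)) {0..x}"
    unfolding Gammafun_def by (intro has_integral_diff integrable_integral Y_integrable)
  then have "norm (Gam j x - Gam j' x) \<le> ?B * Henstock_Kurzweil_Integration.content {0..x}"
    by (rule has_integral_bound_real[OF B finite.emptyI]) (use Y_digits_agree[OF assms(1)] in auto)
  also have "\<dots> \<le> ?B" using assms(2) B mult_left_mono[of x 1 ?B] by auto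
  finally show ?thesis unfolding graph_proj_def by simp
qed

section \<open>Level sets and bands of the projections\<close>

definition "band j y d = {x \<in> {0..<1}. \<bar>graph_proj j x - y\<bar> \<le> d}"
definition "band_measure j y d = measure lebesgue (band j y d)"
definition "level_set j y = {x \<in> {0..<1}. graph_proj j x = y}"
definition "level_measure j y = measure lebesgue (level_set j y)"

lemma band_lmeasurable: "band j y d \<in> lmeasurable"
proof (rule bounded_set_imp_lmeasurable)
  show "bounded (band j y d)" unfolding band_def by (rule bounded_subset[of "{0..1}"]) auto
  have "closed {x. \<bar>graph_proj j x - y\<bar> \<le> d}"
    by (intro closed_Collect_le continuous_intros graph_proj_continuous)
  then have "{0..<1} \<inter> {x. \<bar>graph_proj j x - y\<bar> \<le> d} \<in> sets borel" by auto
  moreover have "band j y d = {0..<1} \<inter> {x. \<bar>graph_proj j x - y\<bar> \<le> d}" unfolding band_def by blast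
  ultimately show "band j y d \<in> sets lebesgue" by simp
qed

lemma level_set_eq_band: "level_set j y = band j y 0"
  unfolding level_set_def band_def by auto

lemma level_set_lmeasurable: "level_set j y \<in> lmeasurable"
  using band_lmeasurable level_set_eq_band by simp

lemma level_measure_eq_band_measure: "level_measure j y = band_measure j y 0"
  unfolding level_measure_def band_measure_def level_set_eq_band ..

lemma band_mono: "d \<le> d' \<Longrightarrow> band j y d \<subseteq> band j y d'"
  unfolding band_def by auto

lemma band_measure_le_1: "band_measure j y d \<le> 1"
proof -
  have "band_measure j y d \<le> measure lebesgue {0..<1::real}"
    unfolding band_measure_def
  proof (rule measure_mono_fmeasurable)
    show "band j y d \<subseteq> {0..<1}" unfolding band_def by auto
    show "band j y d \<in> sets lebesgue" using band_lmeasurable by (simp add: fmeasurable_def)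
    show "{0..<1::real} \<in> lmeasurable" by (intro bounded_set_imp_lmeasurable) auto
  qed
  then show ?thesis by simp
qed

lemma level_measure_bounds: "0 \<le> level_measure j y" "level_measure j y \<le> 1"
  by (simp add: level_measure_def) (simp add: level_measure_eq_band_measure band_measure_le_1)

lemma band_far:
  assumes "\<bar>y\<bar> > Cproj + d" shows "band j y d = {}"
proof -
  have "\<not> \<bar>graph_proj j x - y\<bar> \<le> d" if "x \<in> {0..<1}" for x
    using graph_proj_bound[of x j] that assms by auto
  then show ?thesis unfolding band_def by blast
qed

lemma band_measure_tendsto_level_measure:
  "(\<lambda>n. band_measure j y (1 / real (Suc n))) \<longlonglongrightarrow> level_measure j y"
proof -
  define S where "S n = band j y (1 / real (Suc n))" for n
  have "decseq S" unfolding S_def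
    by (intro decseq_SucI band_mono divide_left_mono) auto
  moreover have "(\<Inter>n. S n) = level_set j y"
  proof (intro equalityI subsetI)
    fix x assume x: "x \<in> (\<Inter>n. S n)"
    then have le: "\<bar>graph_proj j x - y\<bar> \<le> 1 / real (Suc n)" for n unfolding S_def band_def by auto
    have "\<bar>graph_proj j x - y\<bar> \<le> 0"
    proof (rule field_le_epsilon)
      fix \<epsilon> :: real assume "\<epsilon> > 0"
      then obtain n where "1 / real (Suc n) < \<epsilon>" using nat_approx_posE by blast
      then show "\<bar>graph_proj j x - y\<bar> \<le> 0 + \<epsilon>" using le[of n] by simp
    qed
    then show "x \<in> level_set j y" using x unfolding S_def band_def level_set_def by auto
  qed (auto simp: S_def band_def level_set_def)
  moreover have "range S \<subseteq> sets lebesgue" "emeasure lebesgue (S n) \<noteq> \<infinity>" for n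
    using band_lmeasurable unfolding S_def by (auto simp: fmeasurableD emeasure_eq_measure2)
  ultimately have "(\<lambda>n. measure lebesgue (S n)) \<longlonglongrightarrow> measure lebesgue (level_set j y)"
    using Lim_measure_decseq by metis
  then show ?thesis unfolding S_def band_measure_def level_measure_def .
qed

lemma band_subset_band:
  assumes "\<forall>k\<in>{1..N}. j k = j' k" "\<bar>y - y'\<bar> + d + 2 * Dphi * \<gamma> * \<gamma> ^ N / (1 - \<gamma>) \<le> r"
  shows "band j y d \<subseteq> band j' y' r"
proof
  fix x assume x: "x \<in> band j y d"
  then have x01: "x \<in> {0..<1}" and "\<bar>graph_proj j x - y\<bar> \<le> d" unfolding band_def by auto
  moreover have "\<bar>graph_proj j x - graph_proj j' x\<bar> \<le> 2 * Dphi * \<gamma> * \<gamma> ^ N / (1 - \<gamma>)"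
    using graph_proj_digits_agree[OF assms(1)] x01 by simp
  ultimately show "x \<in> band j' y' r" using assms(2) unfolding band_def by simp
qed

lemma band_measure_usc:
  assumes digits: "\<And>k. k \<ge> 1 \<Longrightarrow> eventually (\<lambda>n. js n k = jl k) sequentially"
    and ylim: "ys \<longlonglongrightarrow> yl" and dlim: "ds \<longlonglongrightarrow> 0" and e: "e > 0"
  shows "eventually (\<lambda>n. band_measure (js n) (ys n) (ds n) \<le> level_measure jl yl + e) sequentially"
proof -
  have "eventually (\<lambda>n. band_measure jl yl (1 / real (Suc n)) < level_measure jl yl + e) sequentially"
    using band_measure_tendsto_level_measure e by (intro order_tendstoD(2)) auto
  then obtain n0 where n0: "band_measure jl yl (1 / real (Suc n0)) < level_measure jl yl + e"
    unfolding eventually_sequentially by blast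
  define r where "r = 1 / real (Suc n0)"
  have "(\<lambda>N. (2 * Dphi * \<gamma> / (1 - \<gamma>)) * \<gamma> ^ N) \<longlonglongrightarrow> 0"
    by (intro tendsto_mult_right_zero LIMSEQ_power_zero) (use gamma_pos gamma_lt1 in auto)
  then have "eventually (\<lambda>N. (2 * Dphi * \<gamma> / (1 - \<gamma>)) * \<gamma> ^ N < r / 3) sequentially"
    unfolding r_def by (intro order_tendstoD(2)) auto
  then obtain N where "(2 * Dphi * \<gamma> / (1 - \<gamma>)) * \<gamma> ^ N < r / 3"
    unfolding eventually_sequentially by blast
  then have N: "2 * Dphi * \<gamma> * \<gamma> ^ N / (1 - \<gamma>) < r / 3" by simp
  have "eventually (\<lambda>n. \<forall>k\<in>{1..N}. js n k = jl k) sequentially"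
    using digits by (intro eventually_ball_finite) auto
  moreover have "eventually (\<lambda>n. dist (ys n) yl < r / 3) sequentially"
    by (rule tendstoD[OF ylim]) (simp add: r_def)
  moreover have "eventually (\<lambda>n. dist (ds n) 0 < r / 3) sequentially"
    by (rule tendstoD[OF dlim]) (simp add: r_def)
  ultimately show ?thesis
  proof eventually_elim
    case (elim n)
    then have "\<bar>ys n - yl\<bar> + ds n + 2 * Dphi * \<gamma> * \<gamma> ^ N / (1 - \<gamma>) \<le> r"
      using N unfolding dist_real_def by linarith
    with elim(1) have "band (js n) (ys n) (ds n) \<subseteq> band jl yl r"
      by (rule band_subset_band)
    then have "band_measure (js n) (ys n) (ds n) \<le> band_measure jl yl r"
      unfolding band_measure_def using band_lmeasurable by (intro measure_mono_fmeasurable) auto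
    then show ?case using n0 r_def by simp
  qed
qed

lemma band_measure_limsup:
  assumes js: "\<And>n. js n \<in> SigmaSeq b" and ys: "\<And>n. \<bar>ys n\<bar> \<le> B" and dlim: "ds \<longlonglongrightarrow> 0"
  shows "\<exists>jl\<in>SigmaSeq b. \<exists>yl. \<forall>e>0.
    frequently (\<lambda>n. band_measure (js n) (ys n) (ds n) \<le> level_measure jl yl + e) sequentially"
proof -
  have "b > 0" using b2 by simp
  then obtain r jl yl where r: "strict_mono r" and jl: "jl \<in> SigmaSeq b"
    and digits: "\<And>k. k \<ge> 1 \<Longrightarrow> eventually (\<lambda>n. js (r n) k = jl k) sequentially"
    and ylim: "(\<lambda>n. ys (r n)) \<longlonglongrightarrow> yl"
    using SigmaSeq_bounded_convergent_subseq[where js=js and ys=ys and b=b and B=B] js ys by metis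
  have dlim': "(\<lambda>n. ds (r n)) \<longlonglongrightarrow> 0"
    using LIMSEQ_subseq_LIMSEQ[OF dlim r] by (simp add: o_def)
  have "frequently (\<lambda>n. band_measure (js n) (ys n) (ds n) \<le> level_measure jl yl + e) sequentially"
    if "e > 0" for e
    by (rule frequently_if_eventually_subseq[OF r band_measure_usc[OF digits ylim dlim' that]])
  with jl show ?thesis by blast
qed

lemma level_set_piece:
  assumes i: "i < b"
  shows "level_set j y \<inter> {real i / real b..<(real i + 1) / real b}
    = (\<lambda>t. (1 / real b) *\<^sub>R t + real i / real b) ` level_set (prepend_digit i j) ((y - prepend_offset i j) / lam)"
proof (intro equalityI subsetI)
  fix x assume x: "x \<in> level_set j y \<inter> {real i / real b..<(real i + 1) / real b}"
  define t where "t = real b * x - real i"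
  have xt: "x = (t + real i) / real b" using b_pos by (simp add: t_def)
  have "real i \<le> real b * x" "real b * x < real i + 1"
    using x b_pos by (auto simp: field_simps)
  then have t01: "t \<in> {0..<1}" by (auto simp: t_def)
  have "graph_proj j x = lam * graph_proj (prepend_digit i j) t + prepend_offset i j"
    using graph_proj_prepend_digit[of t j i] t01 xt by simp
  moreover have "graph_proj j x = y" using x by (simp add: level_set_def)
  ultimately have "graph_proj (prepend_digit i j) t = (y - prepend_offset i j) / lam"
    using lam_pos by (simp add: field_simps)
  then have "t \<in> level_set (prepend_digit i j) ((y - prepend_offset i j) / lam)"
    using t01 by (simp add: level_set_def)
  moreover have "x = (1 / real b) *\<^sub>R t + real i / real b" using xt by (simp add: add_divide_distrib)
  ultimately show "x \<in> (\<lambda>t. (1 / real b) *\<^sub>R t + real i / real b) `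
      level_set (prepend_digit i j) ((y - prepend_offset i j) / lam)"
    by blast
next
  fix x assume "x \<in> (\<lambda>t. (1 / real b) *\<^sub>R t + real i / real b) `
      level_set (prepend_digit i j) ((y - prepend_offset i j) / lam)"
  then obtain t where t: "t \<in> level_set (prepend_digit i j) ((y - prepend_offset i j) / lam)"
    and "x = (1 / real b) *\<^sub>R t + real i / real b"
    by blast
  then have xt: "x = (t + real i) / real b" by (simp add: add_divide_distrib)
  have t01: "0 \<le> t" "t < 1" using t by (auto simp: level_set_def)
  have lo: "real i / real b \<le> x" using xt t01 b_pos by (simp add: divide_right_mono)
  have hi: "x < (real i + 1) / real b" using xt t01 b_pos by (simp add: divide_strict_right_mono)
  have "(real i + 1) / real b \<le> 1" using i b_pos by simp
  then have x01: "x \<in> {0..<1}" using lo hi by (auto intro: order_trans[rotated])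
  have "graph_proj j x = lam * graph_proj (prepend_digit i j) t + prepend_offset i j"
    using graph_proj_prepend_digit[of t j i] t01 xt by simp
  also have "graph_proj (prepend_digit i j) t = (y - prepend_offset i j) / lam"
    using t by (simp add: level_set_def)
  finally have "graph_proj j x = y" using lam_pos by simp
  then show "x \<in> level_set j y \<inter> {real i / real b..<(real i + 1) / real b}"
    using x01 lo hi by (simp add: level_set_def)
qed

lemma level_measure_self_similar:
  "level_measure j y = (\<Sum>i<b. level_measure (prepend_digit i j) ((y - prepend_offset i j) / lam)) / real b"
proof -
  have "level_measure j y
      = (\<Sum>i<b. measure lebesgue (level_set j y \<inter> {real i / real b..<(real i + 1) / real b}))"
    unfolding level_measure_def
    by (rule measure_split_b_adic) (use b2 level_set_lmeasurable in \<open>auto simp: level_set_def\<close>)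
  also have "\<dots> = (\<Sum>i<b. level_measure (prepend_digit i j) ((y - prepend_offset i j) / lam) / real b)"
  proof (rule sum.cong)
    fix i assume "i \<in> {..<b}"
    then have "level_set j y \<inter> {real i / real b..<(real i + 1) / real b} = (\<lambda>t. (1 / real b) *\<^sub>R t + real i / real b) `
        level_set (prepend_digit i j) ((y - prepend_offset i j) / lam)"
      by (intro level_set_piece) auto
    then show "measure lebesgue (level_set j y \<inter> {real i / real b..<(real i + 1) / real b})
        = level_measure (prepend_digit i j) ((y - prepend_offset i j) / lam) / real b"
      unfolding level_measure_def
      using measure_lebesgue_affine[of "1 / real b" "real i / real b"
          "level_set (prepend_digit i j) ((y - prepend_offset i j) / lam)"] by simp
  qed simp
  finally show ?thesis by (simp add: sum_divide_distrib)
qed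

definition "level_sup = Sup {level_measure j y | j y. j \<in> SigmaSeq b}"

lemma zero_SigmaSeq: "(\<lambda>_. 0) \<in> SigmaSeq b" using b2 by (simp add: SigmaSeq_def)

lemma level_measure_le_sup: "j \<in> SigmaSeq b \<Longrightarrow> level_measure j y \<le> level_sup"
  unfolding level_sup_def
  by (rule cSup_upper) (use level_measure_bounds in \<open>auto intro!: bdd_aboveI[of _ 1]\<close>)

lemma level_sup_nonneg: "level_sup \<ge> 0"
  using level_measure_le_sup[OF zero_SigmaSeq, of 0] level_measure_bounds(1)[of "\<lambda>_. 0" 0] by linarith

text \<open>A level measure is the average of \<open>b\<close> level measures, so if it is maximal they all are.\<close>
lemma level_measure_prepend_digit_sup:
  assumes j: "j \<in> SigmaSeq b" and max: "level_measure j y = level_sup" and i: "i < b"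
  shows "level_measure (prepend_digit i j) ((y - prepend_offset i j) / lam) = level_sup"
proof (rule ccontr)
  let ?l = "\<lambda>k. level_measure (prepend_digit k j) ((y - prepend_offset k j) / lam)"
  assume "?l i \<noteq> level_sup"
  moreover have le: "\<forall>k\<in>{..<b}. ?l k \<le> level_sup"
    using level_measure_le_sup prepend_digit_SigmaSeq j by auto
  ultimately have "\<exists>k\<in>{..<b}. ?l k < level_sup" using i by force
  then have "(\<Sum>k<b. ?l k) < (\<Sum>k<b. level_sup)"
    using le by (intro sum_strict_mono_ex1) auto
  then have "real b * level_measure j y < real b * level_sup"
    using level_measure_self_similar[of j y] b_pos by (simp add: field_simps)
  then show False using max by simp
qed

lemma level_set_meets_b_adic:
  assumes "j \<in> SigmaSeq b" "level_measure j y = level_sup" "level_sup > 0" "k < b ^ n"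
  shows "\<exists>x\<in>level_set j y. real k / real b ^ n \<le> x \<and> x < (real k + 1) / real b ^ n"
  using assms
proof (induction n arbitrary: j y k)
  case 0
  then have "level_set j y \<noteq> {}" unfolding level_measure_def by auto
  then show ?case using 0 by (auto simp: level_set_def)
next
  case (Suc n)
  define i where "i = k div b ^ n"
  define k' where "k' = k mod b ^ n"
  have i: "i < b" unfolding i_def using Suc.prems(4) by (simp add: less_mult_imp_div_less mult.commute)
  have k': "k' < b ^ n" unfolding k'_def using b2 by simp
  have kk: "real k = real k' + real i * real b ^ n"
    unfolding i_def k'_def by (metis div_mult_mod_eq of_nat_add of_nat_mult of_nat_power add.commute)
  obtain t where t: "t \<in> level_set (prepend_digit i j) ((y - prepend_offset i j) / lam)"
    "real k' / real b ^ n \<le> t" "t < (real k' + 1) / real b ^ n"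
    using Suc.IH[OF prepend_digit_SigmaSeq[OF i Suc.prems(1)]
        level_measure_prepend_digit_sup[OF Suc.prems(1,2) i] Suc.prems(3) k'] by blast
  define x where "x = (t + real i) / real b"
  have "x \<in> level_set j y"
    using level_set_piece[OF i, of j y] t(1) unfolding x_def by (auto simp: add_divide_distrib)
  moreover have "real k / real b ^ Suc n = (real k' / real b ^ n + real i) / real b"
    "(real k + 1) / real b ^ Suc n = ((real k' + 1) / real b ^ n + real i) / real b"
    unfolding kk using b_pos by (simp_all add: field_simps)
  then have "real k / real b ^ Suc n \<le> x" "x < (real k + 1) / real b ^ Suc n"
    unfolding x_def using t(2,3) b_pos by (simp_all add: divide_right_mono divide_strict_right_mono)
  ultimately show ?case by blast
qed

lemma graph_proj_const_if_sup:
  assumes "j \<in> SigmaSeq b" "level_measure j y = level_sup" "level_sup > 0" "x \<in> {0..1}"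
  shows "graph_proj j x = y"
proof -
  have "{0..1} \<subseteq> closure (level_set j y)"
    by (rule closure_if_meets_b_adic_intervals[OF b2 level_set_meets_b_adic[OF assms(1-3)]])
  also have "closure (level_set j y) \<subseteq> {x. graph_proj j x = y}"
    by (intro closure_minimal closed_Collect_eq continuous_intros graph_proj_continuous)
       (auto simp: level_set_def)
  finally show ?thesis using assms(4) by blast
qed

lemma level_sup_attained: obtains j y where "j \<in> SigmaSeq b" "level_measure j y = level_sup"
proof -
  define X where "X = {level_measure j y | j y. j \<in> SigmaSeq b}"
  have "X \<noteq> {}" "bdd_above X"
    unfolding X_def using zero_SigmaSeq level_measure_bounds by (auto intro!: bdd_aboveI[of _ 1])
  have "\<exists>p. fst p \<in> SigmaSeq b \<and> \<bar>snd p\<bar> \<le> Cproj \<and> level_sup - 1 / real (Suc n) < level_measure (fst p) (snd p)"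
    for n
  proof -
    have "\<exists>l\<in>X. level_sup - 1 / real (Suc n) < l"
      using less_cSup_iff[OF \<open>X \<noteq> {}\<close> \<open>bdd_above X\<close>, of "level_sup - 1 / real (Suc n)"]
      unfolding level_sup_def X_def[symmetric] by simp
    then obtain j y where jy: "j \<in> SigmaSeq b" "level_sup - 1 / real (Suc n) < level_measure j y"
      unfolding X_def by blast
    show ?thesis
    proof (cases "\<bar>y\<bar> \<le> Cproj")
      case False
      then have "level_measure j y = 0"
        using band_far[where y=y and d=0 and j=j] by (simp add: level_measure_eq_band_measure band_measure_def)
      then have "level_measure j y \<le> level_measure j 0" using level_measure_bounds(1)[of j 0] by simp
      then show ?thesis using jy Cproj_nonneg by (intro exI[of _ "(j, 0)"]) auto
    qed (use jy in \<open>intro exI[of _ "(j, y)"], auto\<close>)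
  qed
  then obtain p where p: "\<And>n. fst (p n) \<in> SigmaSeq b" "\<And>n. \<bar>snd (p n)\<bar> \<le> Cproj"
    "\<And>n. level_sup - 1 / real (Suc n) < level_measure (fst (p n)) (snd (p n))"
    by metis
  define js where "js n = fst (p n)" for n
  define ys where "ys n = snd (p n)" for n
  have js: "\<And>n. js n \<in> SigmaSeq b" and ys: "\<And>n. \<bar>ys n\<bar> \<le> Cproj"
    and close: "\<And>n. level_sup - 1 / real (Suc n) < level_measure (js n) (ys n)"
    using p unfolding js_def ys_def by auto
  obtain jl yl where jl: "jl \<in> SigmaSeq b"
    and freq: "\<And>e. e > 0 \<Longrightarrow> frequently (\<lambda>n. band_measure (js n) (ys n) 0 \<le> level_measure jl yl + e) sequentially"
    using band_measure_limsup[where js=js and ys=ys and ds="\<lambda>_. 0" and B=Cproj, OF js ys tendsto_const]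
    by blast
  have "level_sup \<le> level_measure jl yl"
  proof (rule field_le_epsilon)
    fix e :: real assume e: "e > 0"
    obtain n0 where n0: "1 / real (Suc n0) < e / 2" using e nat_approx_posE[of "e / 2"] by auto
    obtain n where n: "band_measure (js n) (ys n) 0 \<le> level_measure jl yl + e / 2" "n \<ge> n0"
      using freq[of "e / 2"] e unfolding frequently_sequentially by auto
    have "1 / real (Suc n) \<le> 1 / real (Suc n0)" using n(2) by (intro divide_left_mono) auto
    then show "level_sup \<le> level_measure jl yl + e"
      using close[of n] n(1) n0 level_measure_eq_band_measure[of "js n" "ys n"] by linarith
  qed
  then have "level_measure jl yl = level_sup" using level_measure_le_sup[OF jl, of yl] by simp
  with jl show ?thesis by (rule that)
qed

lemma level_sup_zero_if_not_lipschitz: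
  assumes "\<not> (\<exists>C. C-lipschitz_on UNIV W)"
  shows "level_sup = 0"
proof (rule ccontr)
  assume "level_sup \<noteq> 0"
  then have pos: "level_sup > 0" using level_sup_nonneg by simp
  obtain j y where j: "j \<in> SigmaSeq b" "level_measure j y = level_sup" by (rule level_sup_attained)
  have "CY-lipschitz_on {0..1} W"
  proof (rule lipschitz_onI)
    fix x x' :: real assume "x \<in> {0..1}" "x' \<in> {0..1}"
    then have "W x = y + Gam j x" "W x' = y + Gam j x'"
      using graph_proj_const_if_sup[OF j pos] unfolding graph_proj_def by (simp_all add: algebra_simps)
    then show "dist (W x) (W x') \<le> CY * dist x x'"
      using Gam_lipschitz[of j x x'] by (simp add: dist_real_def)
  qed (rule CY_nonneg)
  then have "CY-lipschitz_on UNIV W" by (intro lipschitz_on_periodic W_periodic)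
  then show False using assms by blast
qed

lemma level_measure_zero_if_not_lipschitz:
  assumes "\<not> (\<exists>C. C-lipschitz_on UNIV W)" "j \<in> SigmaSeq b"
  shows "level_measure j y = 0"
  using level_sup_zero_if_not_lipschitz[OF assms(1)] level_measure_le_sup[OF assms(2), of y]
    level_measure_bounds(1)[of j y] by simp

lemma proj_measure_eq_distr: "proj_measure \<phi> lam b j = distr (lebesgue_on {0..<1}) borel (graph_proj j)"
proof -
  have "(\<lambda>x. (x, W x)) \<in> borel_measurable (lebesgue_on {0..<1})"
    by (intro borel_measurable_lebesgue_on_of_borel borel_measurable_continuous_onI continuous_intros W_continuous)
  moreover have "proj_j \<phi> lam b j \<in> borel_measurable borel"
    unfolding proj_j_def
    by (intro borel_measurable_continuous_onI continuous_intros continuous_on_compose2[OF Gam_continuous]) auto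
  ultimately have "proj_measure \<phi> lam b j = distr (lebesgue_on {0..<1}) borel (proj_j \<phi> lam b j \<circ> (\<lambda>x. (x, W x)))"
    unfolding proj_measure_def graph_measure_def by (intro distr_distr)
  also have "proj_j \<phi> lam b j \<circ> (\<lambda>x. (x, W x)) = graph_proj j"
    unfolding proj_j_def graph_proj_def by (simp add: fun_eq_iff)
  finally show ?thesis .
qed

lemma proj_measure_ball_le_band_measure:
  "measure (proj_measure \<phi> lam b j) (ball y \<delta>) \<le> band_measure j y \<delta>"
proof -
  have "graph_proj j \<in> borel_measurable (lebesgue_on {0..<1})"
    by (intro borel_measurable_lebesgue_on_of_borel borel_measurable_continuous_onI graph_proj_continuous)
  then have "measure (proj_measure \<phi> lam b j) (ball y \<delta>)
      = measure (lebesgue_on {0..<1}) (graph_proj j -` ball y \<delta> \<inter> {0..<1})"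
    unfolding proj_measure_eq_distr by (simp add: measure_distr)
  also have "\<dots> = measure lebesgue (graph_proj j -` ball y \<delta> \<inter> {0..<1})"
    by (rule measure_restrict_space) auto
  also have "\<dots> \<le> band_measure j y \<delta>"
    unfolding band_measure_def
  proof (rule measure_mono_fmeasurable[OF _ _ band_lmeasurable])
    show "graph_proj j -` ball y \<delta> \<inter> {0..<1} \<subseteq> band j y \<delta>"
      unfolding band_def by (auto simp: dist_real_def)
    have "open (graph_proj j -` ball y \<delta>)" by (rule open_vimage[OF open_ball graph_proj_continuous])
    then show "graph_proj j -` ball y \<delta> \<inter> {0..<1} \<in> sets lebesgue" by auto
  qed
  finally show ?thesis .
qed

lemma proj_measure_balls_uniformly_small:
  assumes nl: "\<not> (\<exists>C. C-lipschitz_on UNIV W)" and \<epsilon>: "\<epsilon> > 0"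
  shows "\<exists>\<delta>>0. \<forall>j\<in>SigmaSeq b. \<forall>y. measure (proj_measure \<phi> lam b j) (ball y \<delta>) < \<epsilon>"
proof (rule ccontr)
  assume small: "\<not> ?thesis"
  have "\<exists>p. fst p \<in> SigmaSeq b \<and> \<bar>snd p\<bar> \<le> Cproj + 1 \<and> \<epsilon> \<le> band_measure (fst p) (snd p) (1 / real (Suc n))"
    for n
  proof -
    have "1 / real (Suc n) > 0" by simp
    with small obtain j y where j: "j \<in> SigmaSeq b"
      and "\<not> measure (proj_measure \<phi> lam b j) (ball y (1 / real (Suc n))) < \<epsilon>"
      by blast
    then have band: "\<epsilon> \<le> band_measure j y (1 / real (Suc n))"
      using proj_measure_ball_le_band_measure[of j y "1 / real (Suc n)"] by linarith
    have "\<bar>y\<bar> \<le> Cproj + 1"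
    proof (rule ccontr)
      assume "\<not> \<bar>y\<bar> \<le> Cproj + 1"
      moreover have "1 / real (Suc n) \<le> 1" by simp
      ultimately have "\<bar>y\<bar> > Cproj + 1 / real (Suc n)" by linarith
      then show False
        using band \<epsilon> band_far[where y=y and d="1 / real (Suc n)" and j=j] unfolding band_measure_def by simp
    qed
    then show ?thesis using j band by (intro exI[of _ "(j, y)"]) auto
  qed
  then obtain p where p: "\<And>n. fst (p n) \<in> SigmaSeq b" "\<And>n. \<bar>snd (p n)\<bar> \<le> Cproj + 1"
    "\<And>n. \<epsilon> \<le> band_measure (fst (p n)) (snd (p n)) (1 / real (Suc n))"
    by metis
  have "(\<lambda>n. 1 / real (Suc n)) \<longlonglongrightarrow> 0" by (rule LIMSEQ_Suc[OF lim_inverse_n'])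
  then obtain jl yl where jl: "jl \<in> SigmaSeq b"
    and freq: "\<And>e. e > 0 \<Longrightarrow> frequently (\<lambda>n. band_measure (fst (p n)) (snd (p n)) (1 / real (Suc n))
        \<le> level_measure jl yl + e) sequentially"
    using band_measure_limsup[where js="\<lambda>n. fst (p n)" and ys="\<lambda>n. snd (p n)" and B="Cproj + 1", OF p(1,2)]
    by blast
  obtain n where "band_measure (fst (p n)) (snd (p n)) (1 / real (Suc n)) \<le> level_measure jl yl + \<epsilon> / 2"
    using freq[of "\<epsilon> / 2"] \<epsilon> unfolding frequently_sequentially by auto
  then show False using p(3)[of n] \<epsilon> level_measure_zero_if_not_lipschitz[OF nl jl] by simp
qed

end

theorem mainTheorem11:
  fixes b :: nat and lam :: real and \<phi> :: "real \<Rightarrow> real"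
  assumes "b \<ge> 2"
    and "1 / real b < lam" and "lam < 1"
    and "\<forall>x. \<phi> (x + 1) = \<phi> x"
    and "continuous_on UNIV \<phi>"
    and "piecewise_C2 \<phi>"
    and "\<not> (\<exists>C. C-lipschitz_on UNIV (Wfun \<phi> lam b))"
  shows "\<forall>\<epsilon>>0. \<exists>\<delta>>0. \<forall>j\<in>SigmaSeq b. \<forall>y::real.
           measure (proj_measure \<phi> lam b j) (ball y \<delta>) < \<epsilon>"
proof -
  interpret weierstrass b lam \<phi> using assms by unfold_locales auto
  show ?thesis using proj_measure_balls_uniformly_small[OF assms(7)] by blast
qed

end
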